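(* For every $k\in\mathbb{N}$, $$\|A^*q_k\|_\infty\le1+\frac{R\kappa_{\mathrm{hess}}}{2}\,\mathrm{dist}(\Omega_k,X_k)^2,$$ $$f^*(q^\star)-f^*(q_k)\le\frac{R\kappa_{\mathrm{hess}}\rho^2}{2L}\,\mathrm{dist}(\Omega_k,X_k)^2,\qquad \|q_k-q^\star\|_2\le\rho\sqrt{R\kappa_{\mathrm{hess}}}\;\mathrm{dist}(\Omega_k,X_k).$$
   Context: Setting: $\Omega\subseteq\mathbb{R}^d$ nonempty open convex; $\mathcal{M}(\Omega)$ finite signed Radon measures with total variation norm $\|\cdot\|_{\mathcal{M}}$, $\mathcal{M}(\Omega')$ those supported in $\Omega'\subseteq\Omega$; $a_1,\dots,a_m\in\mathcal{C}_0(\Omega)\cap\mathcal{C}^2(\Omega)$ with uniformly bounded first and second derivatives; $(A\mu)_i=\int a_i\,d\mu$, $A^*q=\sum_iq_ia_i$. $f:\mathbb{R}^m\to\mathbb{R}$ convex, bounded below, differentiable with $L$-Lipschitz gradient; $f^*$ its conjugate. $J(\mu)=\|\mu\|_{\mathcal{M}}+f(A\mu)$; $(\mathcal{P}(\Omega'))$: $\inf_{\mu\in\mathcal{M}(\Omega')}J(\mu)$; $(\mathcal{D}(\Omega'))$: $\sup\{-f^*(q):|A^*q(x)|\le1\ \forall x\in\Omega'\}$; $(\mathcal{P}),(\mathcal{D})$ for $\Omega'=\Omega$. Standing: all these problems used below have solutions and no duality gap. Exchange algorithm: given $\Omega_0\subseteq\Omega$, $q_k$ is the solution of $(\mathcal{D}(\Omega_k))$,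 $X_k$ the set of local maximizers $x\in\Omega$ of $|A^*q_k|$ with $|A^*q_k(x)|>1$, $\Omega_{k+1}=\Omega_k\cup X_k$. For $Y,Z\subseteq\mathbb{R}^d$: $\mathrm{dist}(Y,Z)=\sup_{z\in Z}\inf_{y\in Y}\|y-z\|_2$ (equal to $0$ if $Z=\emptyset$). Source condition: $(\mathcal{P})$ has a unique solution $\mu^\star=\sum_{i=1}^s\alpha_i^\star\delta_{\xi_i}$ (distinct $\xi_i$, $\alpha_i^\star\ne0$), $q^\star$ is the solution of $(\mathcal{D})$. Constants: $\kappa_{\mathrm{hess}}=\sup_{\|q\|_2\le1}\sup_{x\in\Omega}\|\nabla^2(A^*q)(x)\|_{\mathrm{op}}$; $\bar q$ the minimizer of $f^*$, $R=\sqrt{2L(f^*(0)-f^*(\bar q))}+\|\bar q\|_2$; $\rho=\sqrt{\sup_{w\in\partial f^*(q^\star)}-L\langle w,q^\star\rangle}$, assumed finite. *)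

theory Defs
  imports "HOL-Analysis.Analysis"
begin

text \<open>Functions in C_0(Omega): continuous on Omega and vanishing at the boundary / infinity.\<close>
definition c0_on :: "'a::euclidean_space set \<Rightarrow> ('a \<Rightarrow> real) \<Rightarrow> bool" where
  "c0_on \<Omega> g \<longleftrightarrow> continuous_on \<Omega> g \<and>
     (\<forall>e>0. \<exists>K. compact K \<and> K \<subseteq> \<Omega> \<and> (\<forall>x\<in>\<Omega> - K. \<bar>g x\<bar> < e))"

text \<open>A finite signed (Radon) measure on Omega is represented by a pair (P,N) of finite Borel
  measures carried by Omega; it stands for the set function E -> P(E) - N(E).\<close>
type_synonym 'a smeasure = "'a measure \<times> 'a measure"

definition valid_sm :: "'a::euclidean_space set \<Rightarrow> 'a smeasure \<Rightarrow> bool" where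
  "valid_sm \<Omega> \<mu> \<longleftrightarrow> sets (fst \<mu>) = sets borel \<and> sets (snd \<mu>) = sets borel \<and>
     finite_measure (fst \<mu>) \<and> finite_measure (snd \<mu>) \<and>
     emeasure (fst \<mu>) (UNIV - \<Omega>) = 0 \<and> emeasure (snd \<mu>) (UNIV - \<Omega>) = 0"

definition sm :: "'a smeasure \<Rightarrow> 'a set \<Rightarrow> real" where
  "sm \<mu> E = measure (fst \<mu>) E - measure (snd \<mu>) E"

definition tvnorm :: "'a::euclidean_space smeasure \<Rightarrow> real" where
  "tvnorm \<mu> = Sup {(\<Sum>E\<in>\<E>. \<bar>sm \<mu> E\<bar>) | \<E>. finite \<E> \<and> \<E> \<subseteq> sets borel \<and> disjoint \<E>}"

definition supported_in :: "'a::euclidean_space set \<Rightarrow> 'a smeasure \<Rightarrow> bool" where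
  "supported_in \<Omega>' \<mu> \<longleftrightarrow> (\<forall>E\<in>sets borel. E \<inter> \<Omega>' = {} \<longrightarrow> sm \<mu> E = 0)"

definition Mset :: "'a::euclidean_space set \<Rightarrow> 'a set \<Rightarrow> 'a smeasure set" where
  "Mset \<Omega> \<Omega>' = {\<mu>. valid_sm \<Omega> \<mu> \<and> supported_in \<Omega>' \<mu>}"

definition Aop :: "'a::euclidean_space set \<Rightarrow> ('m::finite \<Rightarrow> 'a \<Rightarrow> real) \<Rightarrow> 'a smeasure \<Rightarrow> real^'m" where
  "Aop \<Omega> a \<mu> = (\<chi> i. (LINT x:\<Omega>|fst \<mu>. a i x) - (LINT x:\<Omega>|snd \<mu>. a i x))"

definition Astar :: "('m::finite \<Rightarrow> 'a \<Rightarrow> real) \<Rightarrow> real^'m \<Rightarrow> 'a \<Rightarrow> real" where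
  "Astar a q x = (\<Sum>i\<in>UNIV. q $ i * a i x)"

definition Jfun :: "'a::euclidean_space set \<Rightarrow> ('m::finite \<Rightarrow> 'a \<Rightarrow> real) \<Rightarrow> (real^'m \<Rightarrow> real)
    \<Rightarrow> 'a smeasure \<Rightarrow> real" where
  "Jfun \<Omega> a f \<mu> = tvnorm \<mu> + f (Aop \<Omega> a \<mu>)"

definition primal_sol :: "'a::euclidean_space set \<Rightarrow> ('m::finite \<Rightarrow> 'a \<Rightarrow> real) \<Rightarrow> (real^'m \<Rightarrow> real)
    \<Rightarrow> 'a set \<Rightarrow> 'a smeasure \<Rightarrow> bool" where
  "primal_sol \<Omega> a f \<Omega>' \<mu> \<longleftrightarrow> \<mu> \<in> Mset \<Omega> \<Omega>' \<and> (\<forall>\<nu>\<in>Mset \<Omega> \<Omega>'. Jfun \<Omega> a f \<mu> \<le> Jfun \<Omega> a f \<nu>)"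

definition fstar :: "(real^'m::finite \<Rightarrow> real) \<Rightarrow> real^'m \<Rightarrow> ereal" where
  "fstar f q = (SUP p. ereal (inner p q - f p))"

definition dual_feas :: "('m::finite \<Rightarrow> 'a \<Rightarrow> real) \<Rightarrow> 'a set \<Rightarrow> (real^'m) set" where
  "dual_feas a \<Omega>' = {q. \<forall>x\<in>\<Omega>'. \<bar>Astar a q x\<bar> \<le> 1}"

definition dual_sol :: "('m::finite \<Rightarrow> 'a \<Rightarrow> real) \<Rightarrow> (real^'m \<Rightarrow> real) \<Rightarrow> 'a set \<Rightarrow> real^'m \<Rightarrow> bool" where
  "dual_sol a f \<Omega>' q \<longleftrightarrow> q \<in> dual_feas a \<Omega>' \<and> (\<forall>p\<in>dual_feas a \<Omega>'. - fstar f p \<le> - fstar f q)"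

definition Xset :: "'a::euclidean_space set \<Rightarrow> ('m::finite \<Rightarrow> 'a \<Rightarrow> real) \<Rightarrow> real^'m \<Rightarrow> 'a set" where
  "Xset \<Omega> a q = {x\<in>\<Omega>. (\<exists>e>0. \<forall>y\<in>\<Omega> \<inter> ball x e. \<bar>Astar a q y\<bar> \<le> \<bar>Astar a q x\<bar>) \<and> \<bar>Astar a q x\<bar> > 1}"

definition hdist :: "'a::euclidean_space set \<Rightarrow> 'a set \<Rightarrow> ereal" where
  "hdist Y Z = (if Z = {} then 0 else (SUP z\<in>Z. INF y\<in>Y. ereal (norm (y - z))))"

definition supnorm_on :: "'a set \<Rightarrow> ('a \<Rightarrow> real) \<Rightarrow> real" where
  "supnorm_on \<Omega> g = (SUP x\<in>\<Omega>. \<bar>g x\<bar>)"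

definition hessA :: "('m::finite \<Rightarrow> 'a \<Rightarrow> ('a::euclidean_space \<Rightarrow>\<^sub>L 'a \<Rightarrow>\<^sub>L real)) \<Rightarrow> real^'m \<Rightarrow> 'a
    \<Rightarrow> ('a \<Rightarrow>\<^sub>L 'a \<Rightarrow>\<^sub>L real)" where
  "hessA D2a q x = (\<Sum>i\<in>UNIV. q $ i *\<^sub>R D2a i x)"

definition kappa_hess :: "'a::euclidean_space set \<Rightarrow> ('m::finite \<Rightarrow> 'a \<Rightarrow> ('a \<Rightarrow>\<^sub>L 'a \<Rightarrow>\<^sub>L real)) \<Rightarrow> real" where
  "kappa_hess \<Omega> D2a = (SUP q\<in>cball (0::real^'m) 1. SUP x\<in>\<Omega>. norm (hessA D2a q x))"

definition subdiff_fstar :: "(real^'m::finite \<Rightarrow> real) \<Rightarrow> real^'m \<Rightarrow> (real^'m) set" where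
  "subdiff_fstar f q = {w. \<forall>p. fstar f p \<ge> fstar f q + ereal (inner w (p - q))}"

definition rho_sq :: "(real^'m::finite \<Rightarrow> real) \<Rightarrow> real \<Rightarrow> real^'m \<Rightarrow> ereal" where
  "rho_sq f L qs = (SUP w\<in>subdiff_fstar f qs. ereal (- L * inner w qs))"

end

theory Submission
  imports Defs
begin

text \<open>The iterate \<open>q\<^sub>k\<close> is optimal for the constraint \<open>|A\<^sup>*q| \<le> 1\<close> on \<open>\<Omega>\<^sub>k\<close>, where \<open>q\<^sup>\<star>\<close> and
  \<open>0\<close> are feasible, so \<open>f\<^sup>*(q\<^sub>k) \<le> f\<^sup>*(q\<^sup>\<star>) \<le> f\<^sup>*(0)\<close>; strong convexity of \<open>f\<^sup>*\<close> around its
  minimiser \<open>\<nabla>f(0)\<close> turns this into \<open>\<parallel>q\<^sub>k\<parallel> \<le> R\<close>.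

  If \<open>t = \<parallel>A\<^sup>*q\<^sub>k\<parallel>\<^sub>\<infinity> > 1\<close>, the maximum is attained at a critical point \<open>x \<in> X\<^sub>k\<close>, and a
  second-order Taylor expansion with Hessian norm at most \<open>R\<kappa>\<close> gives
  \<open>t - 1 \<le> R\<kappa>/2 \<parallel>y - x\<parallel>\<^sup>2\<close> for all \<open>y \<in> \<Omega>\<^sub>k\<close>, where \<open>|A\<^sup>*q\<^sub>k| \<le> 1\<close>; hence
  \<open>t - 1 \<le> R\<kappa>/2 dist(\<Omega>\<^sub>k, X\<^sub>k)\<^sup>2\<close>.

  For the dual estimates, the measurement \<open>w = A\<mu>\<^sup>\<star>\<close> of the sparse solution attains the
  conjugate at \<open>q\<^sup>\<star>\<close>, so \<open>w \<in> \<partial>f\<^sup>*(q\<^sup>\<star>)\<close>, and \<open>\<langle>w, q\<^sup>\<star>\<rangle> = -\<parallel>\<mu>\<^sup>\<star>\<parallel>\<close> gives \<open>L\<parallel>\<mu>\<^sup>\<star>\<parallel> \<le> \<rho>\<^sup>2\<close>.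
  Since \<open>f\<^sup>*\<close> is \<open>1/L\<close>-strongly convex, both \<open>f\<^sup>*(q\<^sup>\<star>) - f\<^sup>*(q\<^sub>k)\<close> and
  \<open>\<parallel>q\<^sub>k - q\<^sup>\<star>\<parallel>\<^sup>2/(2L)\<close> are bounded by \<open>\<langle>w, q\<^sup>\<star> - q\<^sub>k\<rangle> \<le> \<parallel>\<mu>\<^sup>\<star>\<parallel>(t - 1)\<close>.\<close>

section \<open>Calculus\<close>

lemma has_vector_derivative_along_line:
  assumes "(g has_derivative g') (at (x + t *\<^sub>R v))"
  shows "((\<lambda>t. g (x + t *\<^sub>R v)) has_vector_derivative g' v) (at t)"
proof -
  have "((\<lambda>t. x + t *\<^sub>R v) has_derivative (\<lambda>h. h *\<^sub>R v)) (at t)"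
    by (auto intro!: derivative_eq_intros)
  from diff_chain_at[OF this assms]
  have "((\<lambda>t. g (x + t *\<^sub>R v)) has_derivative (\<lambda>h. g' (h *\<^sub>R v))) (at t)"
    by (simp add: o_def)
  moreover have "g' (h *\<^sub>R v) = h *\<^sub>R g' v" for h
    using has_derivative_linear[OF assms] by (rule linear_scale)
  ultimately show ?thesis
    by (simp add: has_vector_derivative_def)
qed

lemma has_real_derivative_along_line:
  fixes g :: "'a::real_normed_vector \<Rightarrow> real"
  assumes "(g has_derivative g') (at (x + t *\<^sub>R v))"
  shows "((\<lambda>t. g (x + t *\<^sub>R v)) has_real_derivative g' v) (at t)"
  using has_vector_derivative_along_line[OF assms]
  by (simp add: has_real_derivative_iff_has_vector_derivative)

lemma abs_diff_le_hessian_bound_at_critical_point: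
  fixes g :: "'a::real_normed_vector \<Rightarrow> real"
  assumes "convex S" "x \<in> S" "y \<in> S"
    and dg: "\<And>z. z \<in> S \<Longrightarrow> (g has_derivative blinfun_apply (G z)) (at z)"
    and dG: "\<And>z. z \<in> S \<Longrightarrow> (G has_derivative blinfun_apply (H z)) (at z)"
    and crit: "G x = 0"
    and H_le: "\<And>z. z \<in> S \<Longrightarrow> norm (H z) \<le> M"
  shows "\<bar>g y - g x\<bar> \<le> M / 2 * (norm (y - x))\<^sup>2"
proof -
  define v where "v = y - x"
  have on_segment: "x + t *\<^sub>R v \<in> S" if "0 \<le> t" "t \<le> 1" for t
  proof -
    have "x + t *\<^sub>R v = (1 - t) *\<^sub>R x + t *\<^sub>R y" by (simp add: v_def algebra_simps)
    then show ?thesis using assms(1-3) that by (simp add: convex_def)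
  qed
  define diff where "diff = (\<lambda>m::nat. if m = 0 then (\<lambda>t. g (x + t *\<^sub>R v))
      else if m = 1 then (\<lambda>t. G (x + t *\<^sub>R v) v)
      else (\<lambda>t. H (x + t *\<^sub>R v) v v))"
  have "DERIV (diff m) t :> diff (Suc m) t" if "m < 2" "0 \<le> t" "t \<le> 1" for m t
  proof -
    have z: "x + t *\<^sub>R v \<in> S" using on_segment that by auto
    consider "m = 0" | "m = 1" using \<open>m < 2\<close> by linarith
    then show ?thesis
    proof cases
      case 1
      then show ?thesis
        using has_real_derivative_along_line[OF dg[OF z]] by (simp add: diff_def)
    next
      case 2
      have "((\<lambda>t. G (x + t *\<^sub>R v)) has_vector_derivative H (x + t *\<^sub>R v) v) (at t)"
        by (rule has_vector_derivative_along_line[OF dG[OF z]])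
      then have "((\<lambda>t. G (x + t *\<^sub>R v) v) has_vector_derivative H (x + t *\<^sub>R v) v v) (at t)"
        by (intro bounded_linear.has_vector_derivative[where f="\<lambda>w. blinfun_apply w v"]) auto
      then show ?thesis
        using 2 by (simp add: diff_def has_real_derivative_iff_has_vector_derivative)
    qed
  qed
  then obtain t where t: "0 < t" "t < 1"
    "diff 0 1 = (\<Sum>m<2. diff m 0 / fact m * (1 - 0) ^ m) + diff 2 t / fact 2 * (1 - 0)\<^sup>2"
    using Taylor[of 2 diff "diff 0" 0 1 0 1] by auto
  then have "g y - g x = H (x + t *\<^sub>R v) v v / 2"
    using crit by (simp add: diff_def v_def eval_nat_numeral)
  moreover have "\<bar>H (x + t *\<^sub>R v) v v\<bar> \<le> M * norm v * norm v"
  proof -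
    have "\<bar>H (x + t *\<^sub>R v) v v\<bar> \<le> norm (H (x + t *\<^sub>R v) v) * norm v"
      using norm_blinfun by (metis real_norm_def)
    also have "\<dots> \<le> norm (H (x + t *\<^sub>R v)) * norm v * norm v"
      by (intro mult_right_mono norm_blinfun) auto
    also have "\<dots> \<le> M * norm v * norm v"
      using H_le[OF on_segment] t by (intro mult_right_mono) auto
    finally show ?thesis .
  qed
  ultimately have "\<bar>g y - g x\<bar> \<le> M * norm v * norm v / 2" by arith
  then show ?thesis by (simp add: v_def power2_eq_square)
qed

lemma lipschitz_gradient_upper_bound:
  fixes f :: "'a::real_inner \<Rightarrow> real"
  assumes f_grad: "\<And>p. (f has_derivative (\<lambda>h. inner (gradf p) h)) (at p)"
    and lip: "\<And>p p'. norm (gradf p - gradf p') \<le> L * norm (p - p')"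
  shows "f y \<le> f x + inner (gradf x) (y - x) + L / 2 * (norm (y - x))\<^sup>2"
proof -
  define v where "v = y - x"
  define \<phi> where "\<phi> = (\<lambda>t. f (x + t *\<^sub>R v) - t * inner (gradf x) v - L / 2 * t\<^sup>2 * (norm v)\<^sup>2)"
  have "\<phi> 1 \<le> \<phi> 0"
  proof (rule DERIV_nonpos_imp_nonincreasing[of 0 1 \<phi>])
    fix t :: real assume t: "0 \<le> t" "t \<le> 1"
    have "DERIV \<phi> t :> inner (gradf (x + t *\<^sub>R v)) v - inner (gradf x) v - L / 2 * (2 * t) * (norm v)\<^sup>2"
      unfolding \<phi>_def
      by (auto intro!: derivative_eq_intros has_real_derivative_along_line[OF f_grad])
    moreover have "inner (gradf (x + t *\<^sub>R v)) v - inner (gradf x) v \<le> L / 2 * (2 * t) * (norm v)\<^sup>2"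
    proof -
      have "inner (gradf (x + t *\<^sub>R v)) v - inner (gradf x) v
          \<le> norm (gradf (x + t *\<^sub>R v) - gradf x) * norm v"
        using norm_cauchy_schwarz by (metis inner_diff_left)
      also have "\<dots> \<le> L * norm (t *\<^sub>R v) * norm v"
        using lip[of "x + t *\<^sub>R v" x] by (intro mult_right_mono) auto
      also have "\<dots> = L / 2 * (2 * t) * (norm v)\<^sup>2" using t by (simp add: power2_eq_square)
      finally show ?thesis .
    qed
    ultimately show "\<exists>y. DERIV \<phi> t :> y \<and> y \<le> 0" by force
  qed auto
  then show ?thesis by (simp add: \<phi>_def v_def)
qed

lemma convex_on_gradient_inequality:
  fixes f :: "'a::real_inner \<Rightarrow> real"
  assumes convex: "convex_on UNIV f"
    and f_grad: "\<And>p. (f has_derivative (\<lambda>h. inner (gradf p) h)) (at p)"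
  shows "f x + inner (gradf x) (p - x) \<le> f p"
proof -
  define v where "v = p - x"
  define \<psi> where "\<psi> = (\<lambda>t. f (x + t *\<^sub>R v))"
  have "convex_on UNIV \<psi>"
    unfolding convex_on_def
  proof (intro conjI ballI allI impI, simp)
    fix a b u w :: real assume uw: "0 \<le> u" "0 \<le> w" "u + w = 1"
    have "x + (u *\<^sub>R a + w *\<^sub>R b) *\<^sub>R v = u *\<^sub>R (x + a *\<^sub>R v) + w *\<^sub>R (x + b *\<^sub>R v)"
      using uw by (simp add: algebra_simps flip: scaleR_add_left)
    then show "\<psi> (u *\<^sub>R a + w *\<^sub>R b) \<le> u * \<psi> a + w * \<psi> b"
      using convex uw unfolding convex_on_def \<psi>_def by simp
  qed
  moreover have "(\<psi> has_field_derivative inner (gradf x) v) (at 0 within UNIV)"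
    unfolding \<psi>_def using has_real_derivative_along_line[OF f_grad, where x=x and t=0 and v=v] by simp
  ultimately have "inner (gradf x) v * (1 - 0) \<le> \<psi> 1 - \<psi> 0"
    by (intro convex_on_imp_above_tangent) auto
  then show ?thesis by (simp add: \<psi>_def v_def)
qed

section \<open>The convex conjugate\<close>

lemma fenchel_young: "ereal (inner x q - f x) \<le> fstar f q"
  unfolding fstar_def by (rule SUP_upper) auto

lemma fstar_zero_le:
  assumes "\<And>p. m \<le> f p"
  shows "fstar f 0 \<le> ereal (- m)"
  unfolding fstar_def by (intro SUP_least) (simp add: assms)

lemma fstar_finite_below_zero:
  assumes "bdd_below (range f)" "fstar f q \<le> fstar f 0"
  shows "\<bar>fstar f q\<bar> \<noteq> \<infinity>"
proof -
  obtain m where "\<And>p. m \<le> f p" using assms(1) by (auto simp: bdd_below_def)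
  then have "fstar f q \<le> ereal (- m)" using fstar_zero_le assms(2) by (metis order_trans)
  then have "fstar f q \<noteq> \<infinity>" by auto
  moreover have "fstar f q \<noteq> - \<infinity>" using fenchel_young[of 0 q f] by auto
  ultimately show ?thesis by auto
qed

text \<open>The (1/L)-strong convexity of the conjugate, expanded at a point where the supremum
  defining it is attained.\<close>
lemma fstar_strongly_convex:
  fixes f :: "real^'m::finite \<Rightarrow> real"
  assumes f_grad: "\<And>p. (f has_derivative (\<lambda>h. inner (gradf p) h)) (at p)"
    and lip: "\<And>p p'. norm (gradf p - gradf p') \<le> L * norm (p - p')"
    and L: "L > 0"
    and attained: "fstar f q = ereal (inner w q - f w)"
  shows "fstar f q + ereal (inner w (p - q) + (norm (p - q))\<^sup>2 / (2 * L)) \<le> fstar f p"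
proof -
  have lower: "ereal (inner w p - f w + (norm (p - gradf w))\<^sup>2 / (2 * L)) \<le> fstar f p" for p
  proof -
    define d where "d = p - gradf w"
    define x where "x = w + (1 / L) *\<^sub>R d"
    have "inner w p - f w + (norm d)\<^sup>2 / (2 * L)
        = inner x p - f w - inner (gradf w) (x - w) - L / 2 * (norm (x - w))\<^sup>2"
      using L unfolding x_def d_def
      by (simp add: inner_add inner_diff inner_commute power2_norm_eq_inner field_simps)
    also have "\<dots> \<le> inner x p - f x"
      using lipschitz_gradient_upper_bound[OF f_grad lip, of x w] by simp
    finally show ?thesis
      using fenchel_young[of x p f] d_def by (meson ereal_less_eq(3) order_trans)
  qed
  have "(norm (q - gradf w))\<^sup>2 / (2 * L) \<le> 0"
    using lower[of q] attained by simp
  then have "q = gradf w" using L by (simp add: divide_le_0_iff)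
  then show ?thesis
    using lower[of p] attained by (simp add: algebra_simps)
qed

lemma fstar_gradient:
  fixes f :: "real^'m::finite \<Rightarrow> real"
  assumes "convex_on UNIV f" "\<And>p. (f has_derivative (\<lambda>h. inner (gradf p) h)) (at p)"
  shows "fstar f (gradf x) = ereal (inner x (gradf x) - f x)"
proof (rule antisym)
  show "fstar f (gradf x) \<le> ereal (inner x (gradf x) - f x)"
    unfolding fstar_def
  proof (intro SUP_least)
    fix p
    have "f x + inner (gradf x) (p - x) \<le> f p"
      by (rule convex_on_gradient_inequality[OF assms])
    then show "ereal (inner p (gradf x) - f p) \<le> ereal (inner x (gradf x) - f x)"
      by (simp add: inner_diff_right inner_commute)
  qed
qed (rule fenchel_young)

lemma fstar_gap_bound:
  fixes f :: "real^'m::finite \<Rightarrow> real"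
  assumes f_grad: "\<And>p. (f has_derivative (\<lambda>h. inner (gradf p) h)) (at p)"
    and lip: "\<And>p p'. norm (gradf p - gradf p') \<le> L * norm (p - p')"
    and L: "L > 0"
    and attained: "fstar f qs = ereal (inner w qs - f w)"
    and le: "fstar f q \<le> fstar f qs"
    and \<delta>: "inner w (qs - q) \<le> \<delta>"
  shows "fstar f qs - fstar f q \<le> ereal \<delta>" and "(norm (q - qs))\<^sup>2 \<le> 2 * L * \<delta>"
proof -
  define Fs where "Fs = inner w qs - f w"
  have sc: "ereal (Fs - inner w (qs - q) + (norm (q - qs))\<^sup>2 / (2 * L)) \<le> fstar f q"
    using fstar_strongly_convex[OF f_grad lip L attained, of q] attained
    by (simp add: Fs_def algebra_simps)
  then obtain Fq where Fq: "fstar f q = ereal Fq"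
    using le attained by (cases "fstar f q") auto
  have "Fs - inner w (qs - q) + (norm (q - qs))\<^sup>2 / (2 * L) \<le> Fq" "Fq \<le> Fs"
    using sc le attained Fq by (auto simp: Fs_def)
  moreover have "0 \<le> (norm (q - qs))\<^sup>2 / (2 * L)" using L by simp
  ultimately have "Fs - Fq \<le> \<delta>" "(norm (q - qs))\<^sup>2 / (2 * L) \<le> \<delta>"
    using \<delta> by linarith+
  then show "fstar f qs - fstar f q \<le> ereal \<delta>" and "(norm (q - qs))\<^sup>2 \<le> 2 * L * \<delta>"
    using attained Fq L by (auto simp: Fs_def field_simps)
qed

lemma subdiff_fstar_attained:
  assumes "fstar f q = ereal (inner w q - f w)"
  shows "w \<in> subdiff_fstar f q"
  unfolding subdiff_fstar_def
proof (intro CollectI allI)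
  fix p
  have "fstar f q + ereal (inner w (p - q)) = ereal (inner w p - f w)"
    using assms by (simp add: inner_diff_right)
  also have "\<dots> \<le> fstar f p" by (rule fenchel_young)
  finally show "fstar f q + ereal (inner w (p - q)) \<le> fstar f p" .
qed

lemma le_rho_sq:
  assumes "fstar f qs = ereal (inner w qs - f w)"
  shows "ereal (- L * inner w qs) \<le> rho_sq f L qs"
  unfolding rho_sq_def using subdiff_fstar_attained[OF assms] by (rule SUP_upper)

lemma fstar_gap_bound_rho_sq:
  fixes f :: "real^'m::finite \<Rightarrow> real"
  assumes f_grad: "\<And>p. (f has_derivative (\<lambda>h. inner (gradf p) h)) (at p)"
    and lip: "\<And>p p'. norm (gradf p - gradf p') \<le> L * norm (p - p')"
    and L: "L > 0"
    and attained: "fstar f qs = ereal (inner w qs - f w)"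
    and w_qs: "inner w qs = - c" and "0 \<le> c" and "0 \<le> T"
    and inner_le: "inner w (qs - q) \<le> c * T"
    and le: "fstar f q \<le> fstar f qs"
    and finite: "\<bar>rho_sq f L qs\<bar> \<noteq> \<infinity>"
    and \<rho>: "\<rho> = sqrt (real_of_ereal (rho_sq f L qs))"
  shows "0 \<le> \<rho>" and "fstar f qs - fstar f q \<le> ereal (\<rho>\<^sup>2 / L * T)"
    and "(norm (q - qs))\<^sup>2 \<le> 2 * \<rho>\<^sup>2 * T"
proof -
  have "ereal (L * c) \<le> rho_sq f L qs" using le_rho_sq[OF attained, of L] w_qs by simp
  moreover have "0 \<le> L * c" using L \<open>0 \<le> c\<close> by simp
  moreover obtain r where r: "rho_sq f L qs = ereal r"
    using finite by (cases "rho_sq f L qs") auto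
  ultimately have "L * c \<le> r" "0 \<le> r" by simp_all
  then have Lc: "L * c \<le> \<rho>\<^sup>2" and "0 \<le> \<rho>" unfolding \<rho> r by simp_all
  then show "0 \<le> \<rho>" by blast
  note gap = fstar_gap_bound[OF f_grad lip L attained le inner_le]
  have "c * T \<le> \<rho>\<^sup>2 / L * T"
    using Lc L \<open>0 \<le> T\<close> by (intro mult_right_mono) (simp_all add: field_simps)
  then show "fstar f qs - fstar f q \<le> ereal (\<rho>\<^sup>2 / L * T)"
    using gap(1) by (meson ereal_less_eq(3) order_trans)
  show "(norm (q - qs))\<^sup>2 \<le> 2 * \<rho>\<^sup>2 * T"
    using gap(2) mult_right_mono[OF Lc \<open>0 \<le> T\<close>] by (simp add: mult_ac)
qed

lemma fstar_sublevel_norm_bound: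
  fixes f :: "real^'m::finite \<Rightarrow> real"
  assumes convex: "convex_on UNIV f"
    and f_grad: "\<And>p. (f has_derivative (\<lambda>h. inner (gradf p) h)) (at p)"
    and lip: "\<And>p p'. norm (gradf p - gradf p') \<le> L * norm (p - p')"
    and L: "L > 0" and bdd: "bdd_below (range f)"
    and qbar_min: "\<And>p. fstar f qbar \<le> fstar f p"
    and q: "fstar f q \<le> fstar f 0"
  shows "norm q \<le> sqrt (2 * L * (real_of_ereal (fstar f 0) - real_of_ereal (fstar f qbar))) + norm qbar"
proof -
  have at_grad0: "fstar f (gradf 0) = ereal (inner 0 (gradf 0) - f 0)"
    by (rule fstar_gradient[OF convex f_grad])
  have sc: "ereal (- f 0 + (norm (p - gradf 0))\<^sup>2 / (2 * L)) \<le> fstar f p" for p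
    using fstar_strongly_convex[OF f_grad lip L at_grad0, of p] at_grad0 by simp
  have "ereal (- f 0 + (norm (qbar - gradf 0))\<^sup>2 / (2 * L)) \<le> ereal (- f 0)"
    using order_trans[OF sc qbar_min, of "gradf 0"] at_grad0 by simp
  then have "qbar = gradf 0" using L by (simp add: divide_le_0_iff)
  then have fqbar: "real_of_ereal (fstar f qbar) = - f 0" using at_grad0 by simp
  define F0 where "F0 = real_of_ereal (fstar f 0)"
  have "fstar f 0 = ereal F0"
    unfolding F0_def using fstar_finite_below_zero[OF bdd, of 0] by (simp add: ereal_real')
  then have "(norm (q - qbar))\<^sup>2 / (2 * L) \<le> F0 + f 0"
    using order_trans[OF sc q] \<open>qbar = gradf 0\<close> by simp
  then have "(norm (q - qbar))\<^sup>2 \<le> 2 * L * (F0 - - f 0)" using L by (simp add: field_simps)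
  then have "norm (q - qbar) \<le> sqrt (2 * L * (F0 - - f 0))" by (rule real_le_rsqrt)
  moreover have "norm q \<le> norm (q - qbar) + norm qbar"
    using norm_triangle_ineq[of "q - qbar" qbar] by simp
  ultimately show ?thesis unfolding F0_def[symmetric] fqbar by simp
qed

section \<open>Discrete signed measures\<close>

lemma sum_indicator_inj_on:
  fixes s :: nat
  assumes "inj_on \<xi> {..<s}" "j < s"
  shows "(\<Sum>i<s. c i * indicator {\<xi> j} (\<xi> i)) = (c j :: real)"
proof -
  have "(\<Sum>i<s. c i * indicator {\<xi> j} (\<xi> i)) = (\<Sum>i<s. if i = j then c j else 0)"
    using assms by (intro sum.cong) (auto simp: indicator_def dest: inj_onD)
  also have "\<dots> = c j" using assms(2) by (subst sum.delta) auto
  finally show ?thesis .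
qed

lemma sm_discrete_singleton:
  fixes s :: nat and \<xi> :: "nat \<Rightarrow> 'a::t1_space"
  assumes "\<forall>E\<in>sets borel. sm \<mu> E = (\<Sum>i<s. \<alpha> i * indicator E (\<xi> i))"
    and "inj_on \<xi> {..<s}" "j < s"
  shows "sm \<mu> {\<xi> j} = \<alpha> j"
proof -
  from assms(1) have "sm \<mu> {\<xi> j} = (\<Sum>i<s. \<alpha> i * indicator {\<xi> j} (\<xi> i))"
    by (rule bspec) (auto intro: borel_closed)
  then show ?thesis using sum_indicator_inj_on[OF assms(2,3)] by simp
qed

lemma integral_split_atoms:
  fixes h :: "'a::euclidean_space \<Rightarrow> real" and s :: nat
  assumes sets_M: "sets M = sets borel" and fin: "finite_measure M"
    and "open \<Omega>" and h_cont: "continuous_on \<Omega> h" and h_le: "\<And>x. x \<in> \<Omega> \<Longrightarrow> \<bar>h x\<bar> \<le> C"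
    and \<xi>: "\<And>i. i < s \<Longrightarrow> \<xi> i \<in> \<Omega>" and inj: "inj_on \<xi> {..<s}"
  shows "(LINT x:\<Omega>|M. h x) =
    (LINT x:\<Omega> - \<xi> ` {..<s}|M. h x) + (\<Sum>i<s. h (\<xi> i) * measure M {\<xi> i})"
proof -
  define B where "B = \<Omega> - \<xi> ` {..<s}"
  have space_M: "space M = UNIV" using sets_eq_imp_space_eq[OF sets_M] by simp
  have split: "indicator \<Omega> x *\<^sub>R h x = indicator B x *\<^sub>R h x + (\<Sum>i<s. h (\<xi> i) * indicator {\<xi> i} x)" for x
  proof (cases "x \<in> \<xi> ` {..<s}")
    case True
    then obtain j where j: "j < s" "x = \<xi> j" by auto
    have "(\<Sum>i<s. h (\<xi> i) * indicator {\<xi> i} x) = (\<Sum>i<s. h (\<xi> i) * indicator {\<xi> j} (\<xi> i))"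
      using j by (simp add: indicator_def eq_commute)
    also have "\<dots> = h x" unfolding j(2) by (rule sum_indicator_inj_on[OF inj j(1)])
    finally show ?thesis using True \<xi> j by (simp add: B_def indicator_def)
  next
    case False
    then have "(\<Sum>i<s. h (\<xi> i) * indicator {\<xi> i} x) = 0"
      by (intro sum.neutral) (auto simp: indicator_def)
    then show ?thesis using False by (simp add: B_def indicator_def)
  qed
  have B: "B \<in> sets borel" unfolding B_def
    by (rule sets.Diff[OF borel_open[OF \<open>open \<Omega>\<close>] borel_closed[OF finite_imp_closed]]) auto
  have "(\<lambda>x. indicator \<Omega> x *\<^sub>R h x) \<in> borel_measurable borel"
    using \<open>open \<Omega>\<close> by (intro borel_measurable_continuous_on_indicator h_cont) auto
  then have "(\<lambda>x. indicator B x * (indicator \<Omega> x *\<^sub>R h x)) \<in> borel_measurable M"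
    using B sets_M by measurable
  moreover have "(\<lambda>x. indicator B x * (indicator \<Omega> x *\<^sub>R h x)) = (\<lambda>x. indicator B x *\<^sub>R h x)"
    by (auto simp: B_def indicator_def fun_eq_iff)
  ultimately have "integrable M (\<lambda>x. indicator B x *\<^sub>R h x)"
    using h_le by (intro finite_measure.integrable_const_bound[OF fin, where B="\<bar>C\<bar>"] AE_I2)
      (auto simp: indicator_def B_def intro: order_trans[OF _ abs_ge_self])
  moreover have atoms: "integrable M (indicat_real {\<xi> i})" for i
    using fin sets_M by (intro integrable_real_indicator)
      (auto simp: finite_measure.emeasure_eq_measure)
  ultimately have "(LINT x:\<Omega>|M. h x)
      = (LINT x:B|M. h x) + integral\<^sup>L M (\<lambda>x. \<Sum>i<s. h (\<xi> i) * indicator {\<xi> i} x)"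
    unfolding set_lebesgue_integral_def split
    by (intro Bochner_Integration.integral_add Bochner_Integration.integrable_sum
        Bochner_Integration.integrable_mult_right)
  also have "integral\<^sup>L M (\<lambda>x. \<Sum>i<s. h (\<xi> i) * indicator {\<xi> i} x) = (\<Sum>i<s. h (\<xi> i) * measure M {\<xi> i})"
    using atoms by (subst Bochner_Integration.integral_sum) (auto simp: space_M)
  finally show ?thesis by (simp add: B_def)
qed

lemma set_integral_eq_if_measures_agree_on:
  fixes F :: "'a::euclidean_space \<Rightarrow> real"
  assumes sets_P: "sets P = sets borel" and sets_N: "sets N = sets borel"
    and "finite_measure P" "finite_measure N" and B: "B \<in> sets borel"
    and agree: "\<And>E. E \<in> sets borel \<Longrightarrow> measure P (B \<inter> E) = measure N (B \<inter> E)"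
    and F: "F \<in> borel_measurable borel"
  shows "(LINT x:B|P. F x) = (LINT x:B|N. F x)"
proof -
  have restrict: "emeasure (density M (\<lambda>x. ennreal (indicator B x))) A = emeasure M (B \<inter> A)"
    if sets_M: "sets M = sets borel" and A: "A \<in> sets borel" for M :: "'a measure" and A
  proof -
    have "emeasure (density M (\<lambda>x. ennreal (indicator B x))) A
        = (\<integral>\<^sup>+ x. ennreal (indicator B x) * indicator A x \<partial>M)"
      using A B by (intro emeasure_density) (auto simp: sets_M measurable_cong_sets[OF sets_M refl])
    also have "\<dots> = (\<integral>\<^sup>+ x. indicator (B \<inter> A) x \<partial>M)"
      by (intro nn_integral_cong) (auto simp: indicator_def)
    also have "\<dots> = emeasure M (B \<inter> A)"
      using A B sets_M by (intro nn_integral_indicator) auto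
    finally show ?thesis .
  qed
  have "density P (\<lambda>x. ennreal (indicator B x)) = density N (\<lambda>x. ennreal (indicator B x))"
  proof (rule measure_eqI)
    fix A assume "A \<in> sets (density P (\<lambda>x. ennreal (indicator B x)))"
    then have A: "A \<in> sets borel" using sets_P by simp
    have "emeasure P (B \<inter> A) = emeasure N (B \<inter> A)"
      using agree[OF A] assms(3,4) by (simp add: finite_measure.emeasure_eq_measure)
    then show "emeasure (density P (\<lambda>x. ennreal (indicator B x))) A = emeasure (density N (\<lambda>x. ennreal (indicator B x))) A"
      using restrict[OF sets_P A] restrict[OF sets_N A] by simp
  qed (use sets_P sets_N in simp)
  moreover have "(LINT x:B|M. F x) = integral\<^sup>L (density M (\<lambda>x. ennreal (indicator B x))) F"
    if "sets M = sets borel" for M :: "'a measure"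
    unfolding set_lebesgue_integral_def using B F measurable_cong_sets[OF that refl]
    by (intro integral_density[symmetric]) auto
  ultimately show ?thesis using sets_P sets_N by simp
qed

lemma set_integral_diff_discrete:
  fixes h :: "'a::euclidean_space \<Rightarrow> real" and s :: nat
  assumes valid: "valid_sm \<Omega> \<mu>"
    and discrete: "\<forall>E\<in>sets borel. sm \<mu> E = (\<Sum>i<s. \<alpha> i * indicator E (\<xi> i))"
    and "open \<Omega>" and h_cont: "continuous_on \<Omega> h" and h_le: "\<And>x. x \<in> \<Omega> \<Longrightarrow> \<bar>h x\<bar> \<le> C"
    and \<xi>: "\<And>i. i < s \<Longrightarrow> \<xi> i \<in> \<Omega>" and inj: "inj_on \<xi> {..<s}"
  shows "(LINT x:\<Omega>|fst \<mu>. h x) - (LINT x:\<Omega>|snd \<mu>. h x) = (\<Sum>i<s. \<alpha> i * h (\<xi> i))"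
proof -
  obtain P N where \<mu>: "\<mu> = (P, N)" by (cases \<mu>)
  have P: "sets P = sets borel" "finite_measure P" and N: "sets N = sets borel" "finite_measure N"
    using valid by (auto simp: valid_sm_def \<mu>)
  define B where "B = \<Omega> - \<xi> ` {..<s}"
  have B: "B \<in> sets borel" unfolding B_def
    by (rule sets.Diff[OF borel_open[OF \<open>open \<Omega>\<close>] borel_closed[OF finite_imp_closed]]) auto
  have "measure P (B \<inter> E) = measure N (B \<inter> E)" if "E \<in> sets borel" for E
  proof -
    have "sm \<mu> (B \<inter> E) = 0"
      using discrete B that by (auto intro!: sum.neutral simp: B_def indicator_def)
    then show ?thesis by (simp add: sm_def \<mu>)
  qed
  moreover have "(\<lambda>x. indicator \<Omega> x *\<^sub>R h x) \<in> borel_measurable borel"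
    using \<open>open \<Omega>\<close> by (intro borel_measurable_continuous_on_indicator h_cont) auto
  ultimately have "(LINT x:B|P. indicator \<Omega> x *\<^sub>R h x) = (LINT x:B|N. indicator \<Omega> x *\<^sub>R h x)"
    using P N B by (intro set_integral_eq_if_measures_agree_on) auto
  moreover have "(LINT x:B|M. indicator \<Omega> x *\<^sub>R h x) = (LINT x:B|M. h x)" for M
    unfolding set_lebesgue_integral_def
    by (intro Bochner_Integration.integral_cong) (auto simp: B_def indicator_def)
  ultimately have off_atoms: "(LINT x:B|P. h x) = (LINT x:B|N. h x)" by simp
  have "measure P {\<xi> i} - measure N {\<xi> i} = \<alpha> i" if "i < s" for i
    using sm_discrete_singleton[OF discrete inj that] by (simp add: sm_def \<mu>)
  then have "(\<Sum>i<s. h (\<xi> i) * measure P {\<xi> i}) - (\<Sum>i<s. h (\<xi> i) * measure N {\<xi> i})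
      = (\<Sum>i<s. \<alpha> i * h (\<xi> i))"
    by (simp add: sum_subtractf[symmetric] right_diff_distrib[symmetric] mult.commute)
  then show ?thesis
    using integral_split_atoms[OF P \<open>open \<Omega>\<close> h_cont h_le \<xi> inj]
      integral_split_atoms[OF N \<open>open \<Omega>\<close> h_cont h_le \<xi> inj] off_atoms
    by (simp add: \<mu> B_def)
qed

lemma tvnorm_discrete_ge:
  fixes s :: nat
  assumes valid: "valid_sm \<Omega> \<mu>"
    and discrete: "\<forall>E\<in>sets borel. sm \<mu> E = (\<Sum>i<s. \<alpha> i * indicator E (\<xi> i))"
    and inj: "inj_on \<xi> {..<s}"
  shows "(\<Sum>i<s. \<bar>\<alpha> i\<bar>) \<le> tvnorm \<mu>"
proof -
  obtain P N where \<mu>: "\<mu> = (P, N)" by (cases \<mu>)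
  have P: "sets P = sets borel" "finite_measure P" and N: "sets N = sets borel" "finite_measure N"
    using valid by (auto simp: valid_sm_def \<mu>)
  let ?S = "{(\<Sum>E\<in>\<E>. \<bar>sm \<mu> E\<bar>) | \<E>. finite \<E> \<and> \<E> \<subseteq> sets borel \<and> disjoint \<E>}"
  have sum_le_total: "(\<Sum>E\<in>\<E>. measure M E) \<le> measure M UNIV"
    if "sets M = sets borel" "finite_measure M" "finite \<E>" "\<E> \<subseteq> sets borel" "disjoint \<E>"
    for M :: "'a measure" and \<E>
  proof -
    have "(\<Sum>E\<in>\<E>. measure M E) = measure M (\<Union>E\<in>\<E>. id E)"
      using that measure_finite_Union[of \<E> id M]
      by (auto simp: disjoint_family_on_def pairwise_def disjnt_def finite_measure.emeasure_eq_measure)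
    also have "\<dots> \<le> measure M (space M)" by (rule finite_measure.bounded_measure[OF that(2)])
    also have "space M = UNIV" using sets_eq_imp_space_eq[OF that(1)] by simp
    finally show ?thesis .
  qed
  have "bdd_above ?S"
  proof (rule bdd_aboveI)
    fix y assume "y \<in> ?S"
    then obtain \<E> where \<E>: "finite \<E>" "\<E> \<subseteq> sets borel" "disjoint \<E>" and y: "y = (\<Sum>E\<in>\<E>. \<bar>sm \<mu> E\<bar>)"
      by auto
    have "y \<le> (\<Sum>E\<in>\<E>. measure P E + measure N E)"
      unfolding y sm_def \<mu> by (intro sum_mono) (simp add: abs_le_iff)
    also have "\<dots> \<le> measure P UNIV + measure N UNIV"
      using sum_le_total[OF P \<E>] sum_le_total[OF N \<E>] by (simp add: sum.distrib)
    finally show "y \<le> measure P UNIV + measure N UNIV" .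
  qed
  moreover have "(\<Sum>i<s. \<bar>\<alpha> i\<bar>) \<in> ?S"
  proof -
    have "inj_on (\<lambda>i. {\<xi> i}) {..<s}" using inj by (auto simp: inj_on_def)
    then have "(\<Sum>E\<in>(\<lambda>i. {\<xi> i}) ` {..<s}. \<bar>sm \<mu> E\<bar>) = (\<Sum>i<s. \<bar>\<alpha> i\<bar>)"
      using sm_discrete_singleton[OF discrete inj] by (simp add: sum.reindex)
    moreover have "(\<Sum>E\<in>(\<lambda>i. {\<xi> i}) ` {..<s}. \<bar>sm \<mu> E\<bar>) \<in> ?S"
      using inj by (intro CollectI exI[of _ "(\<lambda>i. {\<xi> i}) ` {..<s}"])
        (auto simp: pairwise_def disjnt_def)
    ultimately show ?thesis by simp
  qed
  ultimately show ?thesis unfolding tvnorm_def by (rule cSup_upper[rotated])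
qed

lemma c0_on_add: "c0_on \<Omega> g \<Longrightarrow> c0_on \<Omega> h \<Longrightarrow> c0_on \<Omega> (\<lambda>x. g x + h x)"
  unfolding c0_on_def
proof (intro conjI allI impI)
  assume g: "continuous_on \<Omega> g \<and> (\<forall>e>0. \<exists>K. compact K \<and> K \<subseteq> \<Omega> \<and> (\<forall>x\<in>\<Omega> - K. \<bar>g x\<bar> < e))"
    and h: "continuous_on \<Omega> h \<and> (\<forall>e>0. \<exists>K. compact K \<and> K \<subseteq> \<Omega> \<and> (\<forall>x\<in>\<Omega> - K. \<bar>h x\<bar> < e))"
  then show "continuous_on \<Omega> (\<lambda>x. g x + h x)" by (intro continuous_intros) auto
  fix e :: real assume "e > 0"
  then have "e / 2 > 0" by simp
  obtain K1 where K1: "compact K1" "K1 \<subseteq> \<Omega>" "\<forall>x\<in>\<Omega> - K1. \<bar>g x\<bar> < e / 2"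
    using g \<open>e / 2 > 0\<close> by blast
  obtain K2 where K2: "compact K2" "K2 \<subseteq> \<Omega>" "\<forall>x\<in>\<Omega> - K2. \<bar>h x\<bar> < e / 2"
    using h \<open>e / 2 > 0\<close> by blast
  have "\<bar>g x + h x\<bar> < e" if "x \<in> \<Omega> - (K1 \<union> K2)" for x
  proof -
    have "\<bar>g x\<bar> < e / 2" "\<bar>h x\<bar> < e / 2" using K1(3) K2(3) that by auto
    then show ?thesis by arith
  qed
  then show "\<exists>K. compact K \<and> K \<subseteq> \<Omega> \<and> (\<forall>x\<in>\<Omega> - K. \<bar>g x + h x\<bar> < e)"
    using K1 K2 by (intro exI[of _ "K1 \<union> K2"]) auto
qed

lemma c0_on_cmult: "c0_on \<Omega> g \<Longrightarrow> c0_on \<Omega> (\<lambda>x. c * g x)"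
  unfolding c0_on_def
proof (intro conjI allI impI)
  assume g: "continuous_on \<Omega> g \<and> (\<forall>e>0. \<exists>K. compact K \<and> K \<subseteq> \<Omega> \<and> (\<forall>x\<in>\<Omega> - K. \<bar>g x\<bar> < e))"
  then show "continuous_on \<Omega> (\<lambda>x. c * g x)" by (intro continuous_intros) auto
  fix e :: real assume "e > 0"
  then have "e / (\<bar>c\<bar> + 1) > 0" by (simp add: add_pos_nonneg)
  then obtain K where K: "compact K" "K \<subseteq> \<Omega>" "\<forall>x\<in>\<Omega> - K. \<bar>g x\<bar> < e / (\<bar>c\<bar> + 1)"
    using g by blast
  have "\<bar>c * g x\<bar> < e" if "x \<in> \<Omega> - K" for x
  proof -
    have "\<bar>c * g x\<bar> \<le> (\<bar>c\<bar> + 1) * \<bar>g x\<bar>" by (simp add: abs_mult mult_right_mono)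
    also have "\<dots> < (\<bar>c\<bar> + 1) * (e / (\<bar>c\<bar> + 1))"
      using K(3) that by (intro mult_strict_left_mono) auto
    also have "\<dots> = e" by (simp add: add_pos_nonneg)
    finally show ?thesis .
  qed
  then show "\<exists>K. compact K \<and> K \<subseteq> \<Omega> \<and> (\<forall>x\<in>\<Omega> - K. \<bar>c * g x\<bar> < e)" using K by blast
qed

lemma c0_on_sum: "finite I \<Longrightarrow> (\<And>i. i \<in> I \<Longrightarrow> c0_on \<Omega> (g i)) \<Longrightarrow> c0_on \<Omega> (\<lambda>x. \<Sum>i\<in>I. g i x)"
proof (induction I rule: finite_induct)
  case empty
  then show ?case unfolding c0_on_def by (auto intro!: exI[of _ "{}"])
next
  case (insert i I)
  then show ?case by (simp add: c0_on_add)
qed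

lemma c0_on_Astar: "(\<And>i. c0_on \<Omega> (a i)) \<Longrightarrow> c0_on \<Omega> (Astar a q)"
  unfolding Astar_def by (intro c0_on_sum c0_on_cmult) auto

lemma c0_on_bounded:
  assumes "c0_on \<Omega> g"
  obtains C where "\<And>x. x \<in> \<Omega> \<Longrightarrow> \<bar>g x\<bar> \<le> C"
proof -
  obtain K where K: "compact K" "K \<subseteq> \<Omega>" "\<forall>x\<in>\<Omega> - K. \<bar>g x\<bar> < 1"
    and cont: "continuous_on \<Omega> g"
    using assms unfolding c0_on_def by (meson zero_less_one)
  have "compact (g ` K)"
    using K(1,2) by (intro compact_continuous_image continuous_on_subset[OF cont])
  then obtain B where B: "\<forall>y\<in>g ` K. \<bar>y\<bar> \<le> B"
    using compact_imp_bounded bounded_real by blast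
  show ?thesis
  proof (rule that)
    fix x assume "x \<in> \<Omega>"
    then show "\<bar>g x\<bar> \<le> max 1 B" using B K(3)[rule_format, of x] by (cases "x \<in> K") auto
  qed
qed

lemma c0_on_attains_sup:
  assumes "c0_on \<Omega> g" "\<Omega> \<noteq> {}" "0 < c" "c < (SUP x\<in>\<Omega>. \<bar>g x\<bar>)"
  obtains x where "x \<in> \<Omega>" "c < \<bar>g x\<bar>" "\<And>y. y \<in> \<Omega> \<Longrightarrow> \<bar>g y\<bar> \<le> \<bar>g x\<bar>"
proof -
  obtain K where K: "compact K" "K \<subseteq> \<Omega>" "\<forall>x\<in>\<Omega> - K. \<bar>g x\<bar> < c" and cont: "continuous_on \<Omega> g"
    using assms(1,3) unfolding c0_on_def by blast
  obtain x' where x': "x' \<in> K" "c < \<bar>g x'\<bar>"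
  proof (rule ccontr)
    assume "\<not> thesis"
    with that have "\<bar>g x\<bar> \<le> c" if "x \<in> \<Omega>" for x
      using K(3)[rule_format, of x] that by (metis DiffI not_less less_imp_le)
    then have "(SUP x\<in>\<Omega>. \<bar>g x\<bar>) \<le> c" using assms(2) by (intro cSUP_least)
    then show False using assms(4) by simp
  qed
  have "continuous_on K (\<lambda>x. \<bar>g x\<bar>)"
    using K(2) by (intro continuous_intros continuous_on_subset[OF cont])
  then obtain x where x: "x \<in> K" "\<And>y. y \<in> K \<Longrightarrow> \<bar>g y\<bar> \<le> \<bar>g x\<bar>"
    using continuous_attains_sup[OF K(1)] x'(1) by blast
  then have "c < \<bar>g x\<bar>" using x' by (meson less_le_trans)
  moreover have "\<bar>g y\<bar> \<le> \<bar>g x\<bar>" if "y \<in> \<Omega>" for y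
  proof (cases "y \<in> K")
    case False
    then show ?thesis using K(3)[rule_format, of y] that \<open>c < \<bar>g x\<bar>\<close> by auto
  qed (use x in blast)
  ultimately show ?thesis using that x K(2) by blast
qed

lemma c0_on_small_somewhere:
  fixes g :: "'a::euclidean_space \<Rightarrow> real"
  assumes "c0_on \<Omega> g" "open \<Omega>" "\<Omega> \<noteq> {}" "0 < e"
  obtains y where "y \<in> \<Omega>" "\<bar>g y\<bar> < e"
proof -
  obtain K where K: "compact K" "K \<subseteq> \<Omega>" "\<forall>x\<in>\<Omega> - K. \<bar>g x\<bar> < e"
    using assms(1,4) unfolding c0_on_def by blast
  have "\<Omega> \<noteq> K"
  proof
    assume "\<Omega> = K"
    then have "closed \<Omega>" using K(1) by (simp add: compact_imp_closed)
    then have "\<Omega> = UNIV" using clopen[of \<Omega>] assms(2,3) by blast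
    then show False using K(1) \<open>\<Omega> = K\<close> compact_imp_bounded not_bounded_UNIV by metis
  qed
  then show ?thesis using K that by auto
qed

lemma abs_le_supnorm_on:
  assumes "c0_on \<Omega> g" "x \<in> \<Omega>"
  shows "\<bar>g x\<bar> \<le> supnorm_on \<Omega> g"
proof -
  obtain C where "\<And>x. x \<in> \<Omega> \<Longrightarrow> \<bar>g x\<bar> \<le> C" using c0_on_bounded[OF assms(1)] by blast
  then show ?thesis unfolding supnorm_on_def using assms(2) by (intro cSUP_upper bdd_aboveI2) auto
qed

lemma Astar_has_derivative:
  assumes "\<And>i. (a i has_derivative blinfun_apply (Da i x)) (at x)"
  shows "(Astar a q has_derivative blinfun_apply (\<Sum>i\<in>UNIV. q $ i *\<^sub>R Da i x)) (at x)"
proof -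
  have "(Astar a q has_derivative (\<lambda>h. \<Sum>i\<in>UNIV. q $ i * Da i x h)) (at x)"
    unfolding Astar_def by (intro has_derivative_sum has_derivative_mult_right assms)
  moreover have "(\<lambda>h. \<Sum>i\<in>UNIV. q $ i * Da i x h) = blinfun_apply (\<Sum>i\<in>UNIV. q $ i *\<^sub>R Da i x)"
    by (auto simp: fun_eq_iff blinfun.sum_left blinfun.scaleR_left)
  ultimately show ?thesis by simp
qed

lemma hessA_has_derivative:
  assumes "\<And>i. (Da i has_derivative blinfun_apply (D2a i x)) (at x)"
  shows "((\<lambda>z. \<Sum>i\<in>UNIV. q $ i *\<^sub>R Da i z) has_derivative blinfun_apply (hessA D2a q x)) (at x)"
proof -
  have "((\<lambda>z. \<Sum>i\<in>UNIV. q $ i *\<^sub>R Da i z) has_derivative (\<lambda>h. \<Sum>i\<in>UNIV. q $ i *\<^sub>R D2a i x h)) (at x)"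
    by (intro has_derivative_sum has_derivative_scaleR_right assms)
  moreover have "(\<lambda>h. \<Sum>i\<in>UNIV. q $ i *\<^sub>R D2a i x h) = blinfun_apply (hessA D2a q x)"
    by (auto simp: fun_eq_iff hessA_def blinfun.sum_left blinfun.scaleR_left)
  ultimately show ?thesis by simp
qed

lemma norm_hessA_le_kappa_hess:
  fixes D2a :: "'m::finite \<Rightarrow> 'a::euclidean_space \<Rightarrow> ('a \<Rightarrow>\<^sub>L 'a \<Rightarrow>\<^sub>L real)"
  assumes "\<Omega> \<noteq> {}" and bounded: "\<And>i. bounded (D2a i ` \<Omega>)" and "z \<in> \<Omega>"
  shows "norm (hessA D2a q z) \<le> norm q * kappa_hess \<Omega> D2a"
proof -
  obtain B where B: "\<And>i x. x \<in> \<Omega> \<Longrightarrow> norm (D2a i x) \<le> B i"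
    using bounded unfolding bounded_iff by (metis imageI)
  have hess_le: "norm (hessA D2a u x) \<le> (\<Sum>i\<in>UNIV. \<bar>B i\<bar>)" if "u \<in> cball 0 1" "x \<in> \<Omega>" for u x
  proof -
    have "norm (hessA D2a u x) \<le> (\<Sum>i\<in>UNIV. \<bar>u $ i\<bar> * norm (D2a i x))"
      unfolding hessA_def by (rule order_trans[OF norm_sum]) simp
    also have "\<dots> \<le> (\<Sum>i\<in>UNIV. 1 * \<bar>B i\<bar>)"
      using that component_le_norm_cart[of u] B
      by (intro sum_mono mult_mono) (auto intro: order_trans order_trans[OF _ abs_ge_self])
    finally show ?thesis by simp
  qed
  have inner_bdd: "bdd_above ((\<lambda>x. norm (hessA D2a u x)) ` \<Omega>)" if "u \<in> cball 0 1" for u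
    using hess_le[OF that] by (intro bdd_aboveI2)
  have "bdd_above ((\<lambda>u. SUP x\<in>\<Omega>. norm (hessA D2a u x)) ` cball 0 1)"
    using hess_le \<open>\<Omega> \<noteq> {}\<close> by (intro bdd_aboveI2 cSUP_least) auto
  then have unit: "norm (hessA D2a u z) \<le> kappa_hess \<Omega> D2a" if "u \<in> cball 0 1" for u
    unfolding kappa_hess_def
    using \<open>z \<in> \<Omega>\<close> inner_bdd[OF that] that
    by (meson cSUP_upper order_trans)
  show ?thesis
  proof (cases "q = 0")
    case False
    have "hessA D2a q z = norm q *\<^sub>R hessA D2a (q /\<^sub>R norm q) z"
      using False by (simp add: hessA_def scaleR_sum_right mult.assoc[symmetric])
    then show ?thesis
      using unit[of "q /\<^sub>R norm q"] False by (simp add: mult_left_mono)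
  qed (simp add: hessA_def)
qed

lemma kappa_hess_nonneg:
  fixes D2a :: "'m::finite \<Rightarrow> 'a::euclidean_space \<Rightarrow> ('a \<Rightarrow>\<^sub>L 'a \<Rightarrow>\<^sub>L real)"
  assumes "\<Omega> \<noteq> {}" and "\<And>i. bounded (D2a i ` \<Omega>)"
  shows "0 \<le> kappa_hess \<Omega> D2a"
proof -
  obtain z where "z \<in> \<Omega>" using assms(1) by auto
  then have "norm (hessA D2a (axis i 1) z) \<le> norm (axis i 1 :: real^'m) * kappa_hess \<Omega> D2a" for i
    using assms by (intro norm_hessA_le_kappa_hess)
  then show ?thesis by (metis norm_axis_1 mult_1 norm_ge_zero order_trans)
qed

section \<open>Violation of the dual constraint\<close>

lemma Astar_second_order_bound_at_max:
  fixes \<Omega> :: "'a::euclidean_space set"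
  assumes "open \<Omega>" "convex \<Omega>"
    and a_D: "\<And>i x. x \<in> \<Omega> \<Longrightarrow> (a i has_derivative blinfun_apply (Da i x)) (at x)"
    and a_D2: "\<And>i x. x \<in> \<Omega> \<Longrightarrow> (Da i has_derivative blinfun_apply (D2a i x)) (at x)"
    and hess: "\<And>z. z \<in> \<Omega> \<Longrightarrow> norm (hessA D2a q z) \<le> M"
    and x: "x \<in> \<Omega>" and max: "\<And>y. y \<in> \<Omega> \<Longrightarrow> \<bar>Astar a q y\<bar> \<le> \<bar>Astar a q x\<bar>"
    and y: "y \<in> \<Omega>"
  shows "\<bar>Astar a q x\<bar> \<le> \<bar>Astar a q y\<bar> + M / 2 * (norm (y - x))\<^sup>2"
proof -
  define G where "G z = (\<Sum>i\<in>UNIV. q $ i *\<^sub>R Da i z)" for z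
  have dg: "(Astar a q has_derivative blinfun_apply (G z)) (at z)" if "z \<in> \<Omega>" for z
    unfolding G_def using a_D[OF that] by (rule Astar_has_derivative)
  have dG: "(G has_derivative blinfun_apply (hessA D2a q z)) (at z)" if "z \<in> \<Omega>" for z
    unfolding G_def[abs_def] using a_D2[OF that] by (rule hessA_has_derivative)
  have "(\<forall>y\<in>\<Omega>. Astar a q y \<le> Astar a q x) \<or> (\<forall>y\<in>\<Omega>. Astar a q x \<le> Astar a q y)"
    using max by (cases "0 \<le> Astar a q x") (auto simp: abs_le_iff)
  then have "blinfun_apply (G x) = (\<lambda>v. 0)"
    by (rule differential_zero_maxmin[OF x \<open>open \<Omega>\<close> dg[OF x]])
  then have "G x = 0" by (intro blinfun_eqI) simp
  from abs_diff_le_hessian_bound_at_critical_point[OF \<open>convex \<Omega>\<close> x y dg dG this hess]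
  show ?thesis by arith
qed

lemma hdist_nonneg: "0 \<le> hdist Y Z"
proof (cases "Z = {}")
  case False
  then obtain z where "z \<in> Z" by auto
  have "0 \<le> (INF y\<in>Y. ereal (norm (y - z)))" by (intro INF_greatest) auto
  also have "\<dots> \<le> (SUP z\<in>Z. INF y\<in>Y. ereal (norm (y - z)))" using \<open>z \<in> Z\<close> by (rule SUP_upper)
  finally show ?thesis using False by (simp add: hdist_def)
qed (simp add: hdist_def)

lemma ereal_mult_square_mono:
  assumes "0 \<le> x" "0 \<le> c" "ereal x \<le> d"
  shows "ereal (c * x\<^sup>2) \<le> ereal c * d\<^sup>2"
proof (cases d)
  case (real D)
  then have "x\<^sup>2 \<le> D\<^sup>2" using assms by (intro power_mono) auto
  then show ?thesis using real assms by (simp add: mult_left_mono power2_eq_square)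
next
  case PInf
  then show ?thesis using assms by (cases "c = 0") (simp_all add: power2_eq_square)
qed (use assms in simp)

lemma le_hdist_square:
  assumes "z \<in> Z" "0 < K" "0 \<le> T"
    and near: "\<And>y. y \<in> Y \<Longrightarrow> T \<le> K / 2 * (norm (y - z))\<^sup>2"
  shows "ereal T \<le> ereal (K / 2) * (hdist Y Z)\<^sup>2"
proof -
  define r where "r = sqrt (2 * T / K)"
  have "ereal r \<le> (INF y\<in>Y. ereal (norm (y - z)))"
  proof (rule INF_greatest)
    fix y assume "y \<in> Y"
    then have "2 * T / K \<le> (norm (y - z))\<^sup>2" using near \<open>0 < K\<close> by (simp add: field_simps)
    then show "ereal r \<le> ereal (norm (y - z))"
      unfolding r_def using real_sqrt_le_mono by fastforce
  qed
  also have "\<dots> \<le> hdist Y Z" unfolding hdist_def using \<open>z \<in> Z\<close> by (auto intro: SUP_upper)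
  finally have "ereal (K / 2 * r\<^sup>2) \<le> ereal (K / 2) * (hdist Y Z)\<^sup>2"
    using assms by (intro ereal_mult_square_mono) (auto simp: r_def)
  moreover have "K / 2 * r\<^sup>2 = T" using assms by (simp add: r_def)
  ultimately show ?thesis by simp
qed

text \<open>A point of maximal violation of \<open>|A\<^sup>*q| \<le> 1\<close> is a critical point of \<open>A\<^sup>*q\<close>, so the
  violation is at most quadratic in the distance to \<open>\<Omega>'\<close>, where the constraint holds.\<close>
lemma supnorm_excess_le_hdist:
  fixes \<Omega> :: "'a::euclidean_space set" and a :: "'m::finite \<Rightarrow> 'a \<Rightarrow> real"
  assumes \<Omega>: "open \<Omega>" "convex \<Omega>" "\<Omega> \<noteq> {}" and "\<Omega>' \<subseteq> \<Omega>"
    and a_c0: "\<And>i. c0_on \<Omega> (a i)"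
    and a_D: "\<And>i x. x \<in> \<Omega> \<Longrightarrow> (a i has_derivative blinfun_apply (Da i x)) (at x)"
    and a_D2: "\<And>i x. x \<in> \<Omega> \<Longrightarrow> (Da i has_derivative blinfun_apply (D2a i x)) (at x)"
    and hess: "\<And>z. z \<in> \<Omega> \<Longrightarrow> norm (hessA D2a q z) \<le> M"
    and feas: "q \<in> dual_feas a \<Omega>'"
  shows "ereal (max (supnorm_on \<Omega> (Astar a q) - 1) 0) \<le> ereal (M / 2) * (hdist \<Omega>' (Xset \<Omega> a q))\<^sup>2"
proof (cases "supnorm_on \<Omega> (Astar a q) \<le> 1")
  case True
  obtain z where "z \<in> \<Omega>" using \<Omega>(3) by auto
  then have "0 \<le> M" using hess norm_ge_zero order_trans by blast
  then have "0 \<le> ereal (M / 2) * (hdist \<Omega>' (Xset \<Omega> a q))\<^sup>2"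
    using hdist_nonneg[of \<Omega>' "Xset \<Omega> a q"] by simp
  then show ?thesis using True by (simp add: zero_ereal_def)
next
  case False
  let ?g = "Astar a q"
  have c0: "c0_on \<Omega> ?g" using a_c0 by (rule c0_on_Astar)
  obtain x where x: "x \<in> \<Omega>" "1 < \<bar>?g x\<bar>" "\<And>y. y \<in> \<Omega> \<Longrightarrow> \<bar>?g y\<bar> \<le> \<bar>?g x\<bar>"
    using c0_on_attains_sup[OF c0 \<Omega>(3), of 1] False unfolding supnorm_on_def by auto
  have sup: "supnorm_on \<Omega> ?g = \<bar>?g x\<bar>"
    unfolding supnorm_on_def using x by (intro cSup_eq_maximum) auto
  have "x \<in> Xset \<Omega> a q" unfolding Xset_def using x by (auto intro!: exI[of _ 1])
  have taylor: "\<bar>?g x\<bar> \<le> \<bar>?g y\<bar> + M / 2 * (norm (y - x))\<^sup>2" if "y \<in> \<Omega>" for y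
    using Astar_second_order_bound_at_max[OF \<Omega>(1,2) a_D a_D2 hess x(1) x(3) that] .
  have "0 < M"
  proof (rule ccontr)
    assume "\<not> 0 < M"
    obtain y where "y \<in> \<Omega>" "\<bar>?g y\<bar> < 1" using c0_on_small_somewhere[OF c0 \<Omega>(1,3), of 1] by auto
    moreover have "M / 2 * (norm (y - x))\<^sup>2 \<le> 0"
      using \<open>\<not> 0 < M\<close> by (simp add: mult_nonpos_nonneg)
    ultimately show False using taylor[of y] x(2) by linarith
  qed
  have "max (supnorm_on \<Omega> ?g - 1) 0 \<le> M / 2 * (norm (y - x))\<^sup>2" if "y \<in> \<Omega>'" for y
  proof -
    have "y \<in> \<Omega>" "\<bar>?g y\<bar> \<le> 1"
      using feas that \<open>\<Omega>' \<subseteq> \<Omega>\<close> unfolding dual_feas_def by blast+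
    then have "\<bar>?g x\<bar> - 1 \<le> M / 2 * (norm (y - x))\<^sup>2" using taylor[of y] by linarith
    moreover have "0 \<le> M / 2 * (norm (y - x))\<^sup>2" using \<open>0 < M\<close> by simp
    ultimately show ?thesis unfolding sup by (simp only: max.bounded_iff)
  qed
  then show ?thesis
    using \<open>x \<in> Xset \<Omega> a q\<close> \<open>0 < M\<close> by (intro le_hdist_square) auto
qed

lemma supnorm_excess_le_kappa_hdist:
  fixes \<Omega> :: "'a::euclidean_space set" and a :: "'m::finite \<Rightarrow> 'a \<Rightarrow> real"
  assumes \<Omega>: "open \<Omega>" "convex \<Omega>" "\<Omega> \<noteq> {}" and "\<Omega>' \<subseteq> \<Omega>"
    and a_c0: "\<And>i. c0_on \<Omega> (a i)"
    and a_D: "\<And>i x. x \<in> \<Omega> \<Longrightarrow> (a i has_derivative blinfun_apply (Da i x)) (at x)"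
    and a_D2: "\<And>i x. x \<in> \<Omega> \<Longrightarrow> (Da i has_derivative blinfun_apply (D2a i x)) (at x)"
    and D2a_bounded: "\<And>i. bounded (D2a i ` \<Omega>)"
    and feas: "q \<in> dual_feas a \<Omega>'" and "norm q \<le> R"
  shows "ereal (max (supnorm_on \<Omega> (Astar a q) - 1) 0)
    \<le> ereal (R * kappa_hess \<Omega> D2a / 2) * (hdist \<Omega>' (Xset \<Omega> a q))\<^sup>2"
proof -
  have "norm (hessA D2a q z) \<le> R * kappa_hess \<Omega> D2a" if "z \<in> \<Omega>" for z
  proof -
    have "norm (hessA D2a q z) \<le> norm q * kappa_hess \<Omega> D2a"
      using \<Omega>(3) D2a_bounded that by (rule norm_hessA_le_kappa_hess)
    also have "\<dots> \<le> R * kappa_hess \<Omega> D2a"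
      using \<open>norm q \<le> R\<close> \<Omega>(3) D2a_bounded by (intro mult_right_mono kappa_hess_nonneg)
    finally show ?thesis .
  qed
  with \<Omega> \<open>\<Omega>' \<subseteq> \<Omega>\<close> a_c0 a_D a_D2 show ?thesis using feas by (rule supnorm_excess_le_hdist)
qed

section \<open>The source certificate\<close>

lemma abs_sum_mult_le:
  fixes \<alpha> g :: "nat \<Rightarrow> real" and s :: nat
  assumes "\<And>j. j < s \<Longrightarrow> \<bar>g j\<bar> \<le> t"
  shows "\<bar>\<Sum>j<s. \<alpha> j * g j\<bar> \<le> (\<Sum>j<s. \<bar>\<alpha> j\<bar>) * t"
proof -
  have "\<bar>\<Sum>j<s. \<alpha> j * g j\<bar> \<le> (\<Sum>j<s. \<bar>\<alpha> j\<bar> * \<bar>g j\<bar>)"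
    using sum_abs[of "\<lambda>j. \<alpha> j * g j" "{..<s}"] by (simp add: abs_mult)
  also have "\<dots> \<le> (\<Sum>j<s. \<bar>\<alpha> j\<bar> * t)"
    using assms by (intro sum_mono mult_left_mono) auto
  finally show ?thesis by (simp add: sum_distrib_right)
qed

lemma inner_Aop_discrete:
  fixes \<Omega> :: "'a::euclidean_space set" and a :: "'m::finite \<Rightarrow> 'a \<Rightarrow> real" and s :: nat
  assumes "open \<Omega>" and valid: "valid_sm \<Omega> \<mu>" and a_c0: "\<And>i. c0_on \<Omega> (a i)"
    and discrete: "\<forall>E\<in>sets borel. sm \<mu> E = (\<Sum>i<s. \<alpha> i * indicator E (\<xi> i))"
    and \<xi>: "\<And>i. i < s \<Longrightarrow> \<xi> i \<in> \<Omega>" and inj: "inj_on \<xi> {..<s}"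
  shows "inner (Aop \<Omega> a \<mu>) p = (\<Sum>j<s. \<alpha> j * Astar a p (\<xi> j))"
proof -
  have "Aop \<Omega> a \<mu> $ i = (\<Sum>j<s. \<alpha> j * a i (\<xi> j))" for i
  proof -
    obtain C where bound: "\<And>x. x \<in> \<Omega> \<Longrightarrow> \<bar>a i x\<bar> \<le> C" using c0_on_bounded[OF a_c0] by blast
    have "continuous_on \<Omega> (a i)" using a_c0 by (simp add: c0_on_def)
    from set_integral_diff_discrete[OF valid discrete \<open>open \<Omega>\<close> this bound \<xi> inj]
    show ?thesis unfolding Aop_def by simp
  qed
  then have "inner (Aop \<Omega> a \<mu>) p = (\<Sum>i\<in>UNIV. \<Sum>j<s. \<alpha> j * (p $ i * a i (\<xi> j)))"
    by (simp add: inner_vec_def sum_distrib_left mult_ac)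
  also have "\<dots> = (\<Sum>j<s. \<alpha> j * Astar a p (\<xi> j))"
    by (subst sum.swap) (simp add: Astar_def sum_distrib_left)
  finally show ?thesis .
qed

text \<open>Under the source condition the measurement of the sparse primal solution is a dual
  certificate: the conjugate is attained there, and it saturates the constraint at the spikes.\<close>
lemma source_certificate:
  fixes \<Omega> :: "'a::euclidean_space set" and a :: "'m::finite \<Rightarrow> 'a \<Rightarrow> real" and s :: nat
  assumes "open \<Omega>" and a_c0: "\<And>i. c0_on \<Omega> (a i)"
    and \<xi>: "\<And>i. i < s \<Longrightarrow> \<xi> i \<in> \<Omega>" and inj: "inj_on \<xi> {..<s}"
    and sol: "primal_sol \<Omega> a f \<Omega> \<mu>" and no_gap: "ereal (Jfun \<Omega> a f \<mu>) = - fstar f qs"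
    and discrete: "\<forall>E\<in>sets borel. sm \<mu> E = (\<Sum>i<s. \<alpha> i * indicator E (\<xi> i))"
    and feas: "qs \<in> dual_feas a \<Omega>"
  shows "fstar f qs = ereal (inner (Aop \<Omega> a \<mu>) qs - f (Aop \<Omega> a \<mu>))"
    and "inner (Aop \<Omega> a \<mu>) qs = - (\<Sum>j<s. \<bar>\<alpha> j\<bar>)"
    and "inner (Aop \<Omega> a \<mu>) (qs - q) \<le> (\<Sum>j<s. \<bar>\<alpha> j\<bar>) * max (supnorm_on \<Omega> (Astar a q) - 1) 0"
proof -
  let ?w = "Aop \<Omega> a \<mu>" and ?c = "\<Sum>j<s. \<bar>\<alpha> j\<bar>"
  have valid: "valid_sm \<Omega> \<mu>" using sol by (simp add: primal_sol_def Mset_def)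
  have inner_w: "inner ?w p = (\<Sum>j<s. \<alpha> j * Astar a p (\<xi> j))" for p
    by (intro inner_Aop_discrete[OF \<open>open \<Omega>\<close> valid _ discrete \<xi> inj] a_c0)
  have "fstar f qs = - ereal (Jfun \<Omega> a f \<mu>)" using no_gap by (metis ereal_uminus_uminus)
  then have fstar_qs: "fstar f qs = ereal (- tvnorm \<mu> - f ?w)" by (simp add: Jfun_def)
  then have "inner ?w qs \<le> - tvnorm \<mu>" using fenchel_young[of ?w qs f] by simp
  moreover have "?c \<le> tvnorm \<mu>" by (rule tvnorm_discrete_ge[OF valid discrete inj])
  moreover have "- ?c \<le> inner ?w qs"
  proof -
    have "\<bar>Astar a qs (\<xi> j)\<bar> \<le> 1" if "j < s" for j
      using feas \<xi>[OF that] unfolding dual_feas_def by blast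
    then show ?thesis using abs_sum_mult_le[of s "\<lambda>j. Astar a qs (\<xi> j)" 1 \<alpha>] inner_w by simp
  qed
  ultimately show w_qs: "inner ?w qs = - ?c" and "fstar f qs = ereal (inner ?w qs - f ?w)"
    using fstar_qs by auto
  have "\<bar>\<Sum>j<s. \<alpha> j * Astar a q (\<xi> j)\<bar> \<le> ?c * supnorm_on \<Omega> (Astar a q)"
    using c0_on_Astar[OF a_c0] \<xi> by (intro abs_sum_mult_le abs_le_supnorm_on)
  moreover have "?c * (supnorm_on \<Omega> (Astar a q) - 1) \<le> ?c * max (supnorm_on \<Omega> (Astar a q) - 1) 0"
    by (intro mult_left_mono) (auto simp: sum_nonneg)
  ultimately show "inner ?w (qs - q) \<le> ?c * max (supnorm_on \<Omega> (Astar a q) - 1) 0"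
    using w_qs inner_w[of q] by (simp add: inner_diff_right right_diff_distrib)
qed

lemma ereal_mult_scaled_bound:
  assumes "0 \<le> c" "ereal T \<le> ereal (K / 2) * e"
  shows "ereal (c * T) \<le> ereal (c * K / 2) * e"
proof -
  have "ereal (c * T) = ereal c * ereal T" by simp
  also have "\<dots> \<le> ereal c * (ereal (K / 2) * e)"
    using assms by (intro ereal_mult_left_mono) auto
  also have "\<dots> = ereal (c * K / 2) * e"
    by (metis mult.assoc times_ereal.simps(1) times_divide_eq_right)
  finally show ?thesis .
qed

lemma ereal_le_mult_from_square_bound:
  fixes e :: ereal and n \<rho> K T :: real
  assumes sq: "n\<^sup>2 \<le> 2 * \<rho>\<^sup>2 * T" and T_le: "ereal T \<le> ereal (K / 2) * e\<^sup>2"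
    and "0 \<le> e" "0 \<le> n" "0 \<le> \<rho>" "0 \<le> K" "0 \<le> T"
  shows "ereal n \<le> ereal (\<rho> * sqrt K) * e"
proof (cases e)
  case (real E)
  have "T \<le> K / 2 * E\<^sup>2" using T_le real by (simp add: power2_eq_square)
  then have "2 * \<rho>\<^sup>2 * T \<le> 2 * \<rho>\<^sup>2 * (K / 2 * E\<^sup>2)" by (intro mult_left_mono) auto
  then have "n\<^sup>2 \<le> (\<rho> * sqrt K * E)\<^sup>2"
    using sq \<open>0 \<le> K\<close> by (simp add: power_mult_distrib)
  moreover have "0 \<le> \<rho> * sqrt K * E" using assms real by simp
  ultimately have "n \<le> \<rho> * sqrt K * E" by (rule power2_le_imp_le)
  then show ?thesis using real by simp
next
  case PInf
  show ?thesis
  proof (cases "\<rho> * sqrt K > 0")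
    case True
    then have "\<rho> \<noteq> 0" "K \<noteq> 0" by auto
    then show ?thesis using True PInf by simp
  next
    case False
    then have zero: "\<rho> = 0 \<or> K = 0" using assms by (auto simp: not_less mult_le_0_iff)
    then have "2 * \<rho>\<^sup>2 * T = 0"
    proof
      assume "K = 0"
      then have "T \<le> 0" using T_le PInf by simp
      then show ?thesis using \<open>0 \<le> T\<close> by simp
    qed simp
    then have "n\<^sup>2 \<le> 0" using sq by linarith
    then have "n = 0" by simp
    moreover have "ereal (\<rho> * sqrt K) * e = 0" using zero by (auto simp flip: zero_ereal_def)
    ultimately show ?thesis by (metis zero_ereal_def order_refl)
  qed
next
  case MInf
  then show ?thesis using \<open>0 \<le> e\<close> by simp
qed

lemma exchange_bounds_from_excess:
  fixes d gap :: ereal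
  assumes excess: "ereal (max (t - 1) 0) \<le> ereal (K / 2) * d\<^sup>2"
    and gap: "gap \<le> ereal (\<rho>\<^sup>2 / L * max (t - 1) 0)"
    and dist: "n\<^sup>2 \<le> 2 * \<rho>\<^sup>2 * max (t - 1) 0"
    and "0 \<le> K" "0 < L" "0 \<le> \<rho>" "0 \<le> n" "0 \<le> d"
  shows "ereal t \<le> 1 + ereal (K / 2) * d\<^sup>2 \<and> gap \<le> ereal (K * \<rho>\<^sup>2 / (2 * L)) * d\<^sup>2
    \<and> ereal n \<le> ereal (\<rho> * sqrt K) * d"
proof (intro conjI)
  have "ereal t \<le> ereal (1 + max (t - 1) 0)" by (simp add: max_def)
  also have "\<dots> = 1 + ereal (max (t - 1) 0)" by (simp only: one_ereal_def plus_ereal.simps(1))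
  also have "\<dots> \<le> 1 + ereal (K / 2) * d\<^sup>2" using excess by (rule add_left_mono)
  finally show "ereal t \<le> 1 + ereal (K / 2) * d\<^sup>2" .
  have "0 \<le> \<rho>\<^sup>2 / L" using \<open>0 < L\<close> by simp
  from this excess have "ereal (\<rho>\<^sup>2 / L * max (t - 1) 0) \<le> ereal (\<rho>\<^sup>2 / L * K / 2) * d\<^sup>2"
    by (rule ereal_mult_scaled_bound)
  with gap have "gap \<le> ereal (\<rho>\<^sup>2 / L * K / 2) * d\<^sup>2" by (rule order_trans)
  also have "\<rho>\<^sup>2 / L * K / 2 = K * \<rho>\<^sup>2 / (2 * L)" by (simp add: mult_ac)
  finally show "gap \<le> ereal (K * \<rho>\<^sup>2 / (2 * L)) * d\<^sup>2" .
  show "ereal n \<le> ereal (\<rho> * sqrt K) * d"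
    using dist excess assms by (intro ereal_le_mult_from_square_bound[where T = "max (t - 1) 0"]) auto
qed

theorem mainTheorem5:
  fixes \<Omega> :: "'a::euclidean_space set"
    and a :: "'m::finite \<Rightarrow> 'a \<Rightarrow> real"
    and Da :: "'m \<Rightarrow> 'a \<Rightarrow> ('a \<Rightarrow>\<^sub>L real)"
    and D2a :: "'m \<Rightarrow> 'a \<Rightarrow> ('a \<Rightarrow>\<^sub>L 'a \<Rightarrow>\<^sub>L real)"
    and f :: "real^'m \<Rightarrow> real" and gradf :: "real^'m \<Rightarrow> real^'m" and L :: real
    and \<Omega>k :: "nat \<Rightarrow> 'a set" and q :: "nat \<Rightarrow> real^'m"
    and s :: nat and \<alpha> :: "nat \<Rightarrow> real" and \<xi> :: "nat \<Rightarrow> 'a"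
    and qs :: "real^'m" and qbar :: "real^'m"
    and R \<kappa> \<rho> :: real
  assumes \<Omega>: "open \<Omega>" "convex \<Omega>" "\<Omega> \<noteq> {}"
    and a_c0: "\<And>i. c0_on \<Omega> (a i)"
    and a_D: "\<And>i x. x \<in> \<Omega> \<Longrightarrow> (a i has_derivative blinfun_apply (Da i x)) (at x)"
    and a_D2: "\<And>i x. x \<in> \<Omega> \<Longrightarrow> (Da i has_derivative blinfun_apply (D2a i x)) (at x)"
    and a_C2: "\<And>i. continuous_on \<Omega> (D2a i)"
    and a_bdd: "\<And>i. bounded (Da i ` \<Omega>)" "\<And>i. bounded (D2a i ` \<Omega>)"
    and f_convex: "convex_on UNIV f"
    and f_bdd: "bdd_below (range f)"
    and f_grad: "\<And>p. (f has_derivative (\<lambda>h. inner (gradf p) h)) (at p)"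
    and L_pos: "L > 0"
    and f_lip: "\<And>p p'. norm (gradf p - gradf p') \<le> L * norm (p - p')"
    \<comment> \<open>the exchange algorithm\<close>
    and \<Omega>0: "\<Omega>k 0 \<subseteq> \<Omega>"
    and \<Omega>_step: "\<And>k. \<Omega>k (Suc k) = \<Omega>k k \<union> Xset \<Omega> a (q k)"
    and q_sol: "\<And>k. dual_sol a f (\<Omega>k k) (q k)"
    \<comment> \<open>standing assumptions: solutions exist, no duality gap\<close>
    and P_k: "\<And>k. \<exists>\<mu>. primal_sol \<Omega> a f (\<Omega>k k) \<mu> \<and> ereal (Jfun \<Omega> a f \<mu>) = - fstar f (q k)"
    \<comment> \<open>source condition\<close>
    and \<xi>_in: "\<And>i. i < s \<Longrightarrow> \<xi> i \<in> \<Omega>"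
    and \<xi>_inj: "inj_on \<xi> {..<s}"
    and \<alpha>_nz: "\<And>i. i < s \<Longrightarrow> \<alpha> i \<noteq> 0"
    and P_sol: "\<exists>\<mu>. primal_sol \<Omega> a f \<Omega> \<mu> \<and> ereal (Jfun \<Omega> a f \<mu>) = - fstar f qs \<and>
                  (\<forall>E\<in>sets borel. sm \<mu> E = (\<Sum>i<s. \<alpha> i * indicator E (\<xi> i)))"
    and P_unique: "\<And>\<mu>. primal_sol \<Omega> a f \<Omega> \<mu> \<Longrightarrow>
                  (\<forall>E\<in>sets borel. sm \<mu> E = (\<Sum>i<s. \<alpha> i * indicator E (\<xi> i)))"
    and qs_sol: "dual_sol a f \<Omega> qs"
    \<comment> \<open>constants\<close>
    and \<kappa>_def: "\<kappa> = kappa_hess \<Omega> D2a"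
    and qbar_min: "\<And>p. fstar f qbar \<le> fstar f p"
    and R_def: "R = sqrt (2 * L * (real_of_ereal (fstar f 0) - real_of_ereal (fstar f qbar))) + norm qbar"
    and \<rho>_fin: "\<bar>rho_sq f L qs\<bar> \<noteq> \<infinity>"
    and \<rho>_def: "\<rho> = sqrt (real_of_ereal (rho_sq f L qs))"
  shows "ereal (supnorm_on \<Omega> (Astar a (q k))) \<le> 1 + ereal (R * \<kappa> / 2) * (hdist (\<Omega>k k) (Xset \<Omega> a (q k)))\<^sup>2
       \<and> fstar f qs - fstar f (q k) \<le> ereal (R * \<kappa> * \<rho>\<^sup>2 / (2 * L)) * (hdist (\<Omega>k k) (Xset \<Omega> a (q k)))\<^sup>2
       \<and> ereal (norm (q k - qs)) \<le> ereal (\<rho> * sqrt (R * \<kappa>)) * hdist (\<Omega>k k) (Xset \<Omega> a (q k))"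
proof -
  let ?d = "hdist (\<Omega>k k) (Xset \<Omega> a (q k))"
  have \<Omega>k_sub: "\<Omega>k k \<subseteq> \<Omega>" by (induction k) (auto simp: \<Omega>_step Xset_def \<Omega>0)
  have q_feas: "q k \<in> dual_feas a (\<Omega>k k)"
    and q_opt: "\<And>p. p \<in> dual_feas a (\<Omega>k k) \<Longrightarrow> fstar f (q k) \<le> fstar f p"
    using q_sol[of k] by (auto simp: dual_sol_def)
  have "norm (q k) \<le> R"
    unfolding R_def using q_opt[of 0]
    by (intro fstar_sublevel_norm_bound[OF f_convex f_grad f_lip L_pos f_bdd qbar_min])
      (simp add: dual_feas_def Astar_def)
  with \<Omega> \<Omega>k_sub a_c0 a_D a_D2 a_bdd(2) q_feas
  have excess: "ereal (max (supnorm_on \<Omega> (Astar a (q k)) - 1) 0) \<le> ereal (R * \<kappa> / 2) * ?d\<^sup>2"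
    unfolding \<kappa>_def by (rule supnorm_excess_le_kappa_hdist)
  have "0 \<le> R * \<kappa>"
    using \<open>norm (q k) \<le> R\<close> kappa_hess_nonneg[where D2a = D2a, OF \<Omega>(3) a_bdd(2)] unfolding \<kappa>_def
    by (meson mult_nonneg_nonneg norm_ge_zero order_trans)
  obtain \<mu> where \<mu>: "primal_sol \<Omega> a f \<Omega> \<mu>" "ereal (Jfun \<Omega> a f \<mu>) = - fstar f qs"
    "\<forall>E\<in>sets borel. sm \<mu> E = (\<Sum>i<s. \<alpha> i * indicator E (\<xi> i))"
    using P_sol by blast
  have qs_feas: "qs \<in> dual_feas a \<Omega>" using qs_sol by (simp add: dual_sol_def)
  note certificate = source_certificate[where a = a, OF \<Omega>(1) a_c0 \<xi>_in \<xi>_inj \<mu> qs_feas]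
  have "qs \<in> dual_feas a (\<Omega>k k)" using qs_feas \<Omega>k_sub by (auto simp: dual_feas_def)
  note bounds = fstar_gap_bound_rho_sq[OF f_grad f_lip L_pos certificate(1,2)
      sum_nonneg[OF abs_ge_zero] max.cobounded2 certificate(3) q_opt[OF this] \<rho>_fin \<rho>_def]
  show ?thesis
    by (rule exchange_bounds_from_excess[OF excess bounds(2,3) \<open>0 \<le> R * \<kappa>\<close> L_pos bounds(1)
          norm_ge_zero hdist_nonneg])
qed

end
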